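(* Let $R$ be a reflexive relation on $U$. The set of completely join-irreducible elements of $\mathrm{DM(RS)}$ is $\{(\{x\}^{\vartriangle\blacktriangledown},\{x\}^{\vartriangle\blacktriangle})\mid \{x\}^{\vartriangle}\text{ is completely join-irreducible in }\wp(U)^{\vartriangle}\}\ \cup\ \{(\{x\}^{\blacktriangledown},\{x\}^{\blacktriangle})\mid \{x\}^{\blacktriangle}\text{ is completely join-irreducible in }\wp(U)^{\blacktriangle}\text{ and }x\notin\mathcal S\}.$
   Context: Let $U$ be a set and $R\subseteq U\times U$ a binary relation. For $x\in U$, $R(x)=\{y\in U\mid (x,y)\in R\}$ and $\breve R(x)=\{y\in U\mid (y,x)\in R\}$. For $X\subseteq U$: $X^{\blacktriangledown}=\{x\in U\mid R(x)\subseteq X\}$, $X^{\blacktriangle}=\{x\in U\mid R(x)\cap X\neq\emptyset\}$, $X^{\triangledown}=\{x\in U\mid \breve R(x)\subseteq X\}$, $X^{\vartriangle}=\{x\in U\mid \breve R(x)\cap X\neq\emptyset\}$; thus $\{x\}^{\vartriangle}=R(x)$ and $\{x\}^{\blacktriangle}=\breve R(x)$, and composites such as $X^{\vartriangle\blacktriangledown}$ mean $(X^{\vartriangle})^{\blacktriangledown}$. $\wp(U)^{\blacktriangledown}=\{X^{\blacktriangledown}\mid X\subseteq U\}$ and similarly $\wp(U)^{\blacktriangle},\wp(U)^{\vartriangle}$, complete lattices under $\subseteq$ (joins in $\wp(U)^{\blacktriangle},\wp(U)^{\vartriangle}$ are unions). $\mathcal S=\{x\in U\mid |R(x)|=1\}$.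 $\mathrm{RS}=\{(X^{\blacktriangledown},X^{\blacktriangle})\mid X\subseteq U\}$ ordered coordinatewise; $\mathrm{DM(RS)}$ is its Dedekind–MacNeille completion, identified with $\{(A,B)\in\wp(U)^{\blacktriangledown}\times\wp(U)^{\blacktriangle}\mid A^{\vartriangle\blacktriangle}\subseteq B,\ A\cap\mathcal S=B\cap\mathcal S\}$ ordered coordinatewise, with meets $\bigwedge_i(X_i,Y_i)=(\bigcap_iX_i,(\bigcap_iY_i)^{\triangledown\blacktriangle})$ and joins $\bigvee_i(X_i,Y_i)=((\bigcup_iX_i)^{\vartriangle\blacktriangledown},\bigcup_iY_i)$. An element $j$ of a complete lattice $L$ is completely join-irreducible if $j=\bigvee S$ implies $j\in S$ for every $S\subseteq L$. *)

theory Defs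
  imports Main
begin

text \<open>The universe U is the type 'a (U = UNIV). R is a binary relation on it.\<close>

definition Rimg :: "('a \<times> 'a) set \<Rightarrow> 'a \<Rightarrow> 'a set" where
  "Rimg R x = {y. (x, y) \<in> R}"

definition Rconv :: "('a \<times> 'a) set \<Rightarrow> 'a \<Rightarrow> 'a set" where
  "Rconv R x = {y. (y, x) \<in> R}"

definition bdown :: "('a \<times> 'a) set \<Rightarrow> 'a set \<Rightarrow> 'a set" where
  "bdown R X = {x. Rimg R x \<subseteq> X}"

definition bup :: "('a \<times> 'a) set \<Rightarrow> 'a set \<Rightarrow> 'a set" where
  "bup R X = {x. Rimg R x \<inter> X \<noteq> {}}"

definition wdown :: "('a \<times> 'a) set \<Rightarrow> 'a set \<Rightarrow> 'a set" where
  "wdown R X = {x. Rconv R x \<subseteq> X}"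

definition wup :: "('a \<times> 'a) set \<Rightarrow> 'a set \<Rightarrow> 'a set" where
  "wup R X = {x. Rconv R x \<inter> X \<noteq> {}}"

definition singR :: "('a \<times> 'a) set \<Rightarrow> 'a set" where
  "singR R = {x. \<exists>y. Rimg R x = {y}}"

(* DM(RS), in its identified form *)
definition DM :: "('a \<times> 'a) set \<Rightarrow> ('a set \<times> 'a set) set" where
  "DM R = {(A, B). A \<in> range (bdown R) \<and> B \<in> range (bup R)
            \<and> bup R (wup R A) \<subseteq> B \<and> A \<inter> singR R = B \<inter> singR R}"

definition pair_le :: "('a set \<times> 'a set) \<Rightarrow> ('a set \<times> 'a set) \<Rightarrow> bool" where
  "pair_le p q \<longleftrightarrow> fst p \<subseteq> fst q \<and> snd p \<subseteq> snd q"

definition is_join :: "'b set \<Rightarrow> ('b \<Rightarrow> 'b \<Rightarrow> bool) \<Rightarrow> 'b set \<Rightarrow> 'b \<Rightarrow> bool" where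
  "is_join L le S j \<longleftrightarrow> j \<in> L \<and> (\<forall>s\<in>S. le s j)
       \<and> (\<forall>u\<in>L. (\<forall>s\<in>S. le s u) \<longrightarrow> le j u)"

definition cji :: "'b set \<Rightarrow> ('b \<Rightarrow> 'b \<Rightarrow> bool) \<Rightarrow> 'b \<Rightarrow> bool" where
  "cji L le j \<longleftrightarrow> j \<in> L \<and> (\<forall>S. S \<subseteq> L \<longrightarrow> is_join L le S j \<longrightarrow> j \<in> S)"

end

theory Submission
  imports Defs
begin

text \<open>
  The maps \<open>X \<mapsto> X\<^sup>\<vartriangle>\<close> and \<open>X \<mapsto> X\<^sup>\<blacktriangle>\<close> preserve unions, so joins in
  \<open>\<wp>(U)\<^sup>\<vartriangle>\<close> and \<open>\<wp>(U)\<^sup>\<blacktriangle>\<close> are unions, and joins in \<open>DM(RS)\<close> are computed by the explicit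
  formula for \<open>\<Or>\<close>. Two embeddings reflect and preserve complete join-irreducibility:
  \<open>W \<mapsto> (W\<^sup>\<blacktriangledown>, W\<^sup>\<blacktriangle>)\<close> on \<open>\<wp>(U)\<^sup>\<vartriangle>\<close>, and \<open>W \<mapsto> (\<emptyset>, W)\<close> on those \<open>W \<in> \<wp>(U)\<^sup>\<blacktriangle>\<close> that avoid
  \<open>\<S>\<close>. By reflexivity, \<open>({x}\<^sup>\<blacktriangledown>, {x}\<^sup>\<blacktriangle>)\<close> is of the second kind when \<open>x \<notin> \<S>\<close>.
  Conversely, every \<open>(A, Y\<^sup>\<blacktriangle>) \<in> DM(RS)\<close> is the join of the elements
  \<open>({a}\<^sup>\<vartriangle>\<^sup>\<blacktriangledown>, {a}\<^sup>\<vartriangle>\<^sup>\<blacktriangle>)\<close> for \<open>a \<in> A\<close> and \<open>({y}\<^sup>\<blacktriangledown>, {y}\<^sup>\<blacktriangle>)\<close> for \<open>y \<in> Y - \<S>\<close>,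
  so a completely join-irreducible element must be one of them.
\<close>

lemma wup_Union: "wup R (\<Union>\<X>) = \<Union>(wup R ` \<X>)"
  by (auto simp: wup_def)

lemma bup_Union: "bup R (\<Union>\<X>) = \<Union>(bup R ` \<X>)"
  by (auto simp: bup_def)

lemma wup_mono: "X \<subseteq> Y \<Longrightarrow> wup R X \<subseteq> wup R Y"
  by (auto simp: wup_def)

lemma bup_mono: "X \<subseteq> Y \<Longrightarrow> bup R X \<subseteq> bup R Y"
  by (auto simp: bup_def)

lemma bdown_mono: "X \<subseteq> Y \<Longrightarrow> bdown R X \<subseteq> bdown R Y"
  by (auto simp: bdown_def)

lemma subset_bdown_wup: "X \<subseteq> bdown R (wup R X)"
  by (auto simp: wup_def bdown_def Rimg_def Rconv_def)

lemma wup_bdown_subset: "wup R (bdown R Y) \<subseteq> Y"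
  by (auto simp: wup_def bdown_def Rimg_def Rconv_def)

lemma bdown_wup_bdown: "bdown R (wup R (bdown R Y)) = bdown R Y"
  by (meson bdown_mono subset_bdown_wup wup_bdown_subset subset_antisym)

lemma wup_bdown_wup: "wup R (bdown R (wup R X)) = wup R X"
  by (meson wup_mono subset_bdown_wup wup_bdown_subset subset_antisym)

lemma bdown_wup_eq_if_in_range: "A \<in> range (bdown R) \<Longrightarrow> bdown R (wup R A) = A"
  by (auto simp: bdown_wup_bdown)

lemma wup_bdown_eq_if_in_range: "W \<in> range (wup R) \<Longrightarrow> wup R (bdown R W) = W"
  by (auto simp: wup_bdown_wup)

lemma Union_in_range_if_Union_preserving:
  assumes "\<And>\<X>. f (\<Union>\<X>) = \<Union>(f ` \<X>)" and "F \<subseteq> range f"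
  shows "\<Union>F \<in> range f"
proof -
  have "f ` {X. f X \<in> F} = F"
    using assms(2) by blast
  then have "f (\<Union>{X. f X \<in> F}) = \<Union>F"
    by (simp add: assms(1))
  then show ?thesis
    by (metis rangeI)
qed

lemma cji_Union_closed_iff:
  assumes "\<And>F. F \<subseteq> L \<Longrightarrow> \<Union>F \<in> L"
  shows "cji L (\<subseteq>) W \<longleftrightarrow> W \<in> L \<and> (\<forall>F \<subseteq> L. \<Union>F = W \<longrightarrow> W \<in> F)"
proof -
  have "is_join L (\<subseteq>) F W \<longleftrightarrow> W = \<Union>F" if "F \<subseteq> L" for F
    using assms[OF that] unfolding is_join_def by blast
  then show ?thesis
    unfolding cji_def by blast
qed

lemma cji_range_wup_iff:
  "cji (range (wup R)) (\<subseteq>) W \<longleftrightarrow>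
     W \<in> range (wup R) \<and> (\<forall>F \<subseteq> range (wup R). \<Union>F = W \<longrightarrow> W \<in> F)"
  by (intro cji_Union_closed_iff Union_in_range_if_Union_preserving wup_Union)

lemma cji_range_bup_iff:
  "cji (range (bup R)) (\<subseteq>) W \<longleftrightarrow>
     W \<in> range (bup R) \<and> (\<forall>F \<subseteq> range (bup R). \<Union>F = W \<longrightarrow> W \<in> F)"
  by (intro cji_Union_closed_iff Union_in_range_if_Union_preserving bup_Union)

lemma cji_range_wupD:
  "cji (range (wup R)) (\<subseteq>) W \<Longrightarrow> F \<subseteq> range (wup R) \<Longrightarrow> \<Union>F = W \<Longrightarrow> W \<in> F"
  by (simp add: cji_range_wup_iff)

lemma cji_range_bupD:
  "cji (range (bup R)) (\<subseteq>) W \<Longrightarrow> F \<subseteq> range (bup R) \<Longrightarrow> \<Union>F = W \<Longrightarrow> W \<in> F"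
  by (simp add: cji_range_bup_iff)

subsection \<open>Joins in DM(RS)\<close>

lemma DM_memD:
  assumes "(A, B) \<in> DM R"
  shows "A \<in> range (bdown R)" "B \<in> range (bup R)" "bup R (wup R A) \<subseteq> B"
    "A \<inter> singR R = B \<inter> singR R"
  using assms by (simp_all add: DM_def)

lemma snd_image_subset_range_bup: "G \<subseteq> DM R \<Longrightarrow> snd ` G \<subseteq> range (bup R)"
  using DM_memD(2) by fastforce

definition DM_join :: "('a \<times> 'a) set \<Rightarrow> ('a set \<times> 'a set) set \<Rightarrow> 'a set \<times> 'a set" where
  "DM_join R G = (bdown R (wup R (\<Union>(fst ` G))), \<Union>(snd ` G))"

lemma DM_join_in_DM:
  assumes G: "G \<subseteq> DM R"
  shows "DM_join R G \<in> DM R"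
proof -
  let ?U = "\<Union>(fst ` G)" and ?V = "\<Union>(snd ` G)"
  have "?V \<in> range (bup R)"
    using snd_image_subset_range_bup[OF G]
    by (intro Union_in_range_if_Union_preserving bup_Union)
  moreover have "bup R (wup R (bdown R (wup R ?U))) \<subseteq> ?V"
  proof -
    have "bup R (wup R (bdown R (wup R ?U))) = (\<Union>q\<in>G. bup R (wup R (fst q)))"
      by (simp only: wup_bdown_wup) (simp add: wup_Union bup_Union)
    also have "\<dots> \<subseteq> ?V"
      using G DM_memD(3) by (fastforce simp: subset_iff)
    finally show ?thesis .
  qed
  moreover have "bdown R (wup R ?U) \<inter> singR R = ?V \<inter> singR R"
  proof (intro equalityI subsetI)
    fix y assume y: "y \<in> bdown R (wup R ?U) \<inter> singR R"
    then obtain z where z: "Rimg R y = {z}"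
      by (auto simp: singR_def)
    with y obtain A B where AB: "(A, B) \<in> G" "z \<in> wup R A"
      by (auto simp: bdown_def wup_Union)
    then have "y \<in> bup R (wup R A)"
      using z by (auto simp: bup_def)
    then show "y \<in> ?V \<inter> singR R"
      using AB y G DM_memD(3)[of A B R] by force
  next
    fix y assume y: "y \<in> ?V \<inter> singR R"
    then obtain A B where AB: "(A, B) \<in> G" "y \<in> B"
      by auto
    then have "y \<in> A"
      using y G DM_memD(4)[of A B R] by blast
    then show "y \<in> bdown R (wup R ?U) \<inter> singR R"
      using AB y subset_bdown_wup[of ?U R] by force
  qed
  ultimately show ?thesis
    unfolding DM_join_def DM_def by auto
qed

lemma is_join_DM_iff:
  assumes G: "G \<subseteq> DM R"
  shows "is_join (DM R) pair_le G p \<longleftrightarrow> p = DM_join R G"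
proof -
  have upper: "pair_le q (DM_join R G)" if "q \<in> G" for q
  proof -
    have "fst q \<subseteq> \<Union>(fst ` G)"
      using that by blast
    then have "fst q \<subseteq> bdown R (wup R (\<Union>(fst ` G)))"
      by (meson bdown_mono subset_bdown_wup wup_mono order_trans)
    then show ?thesis
      using that unfolding pair_le_def DM_join_def by auto
  qed
  have least: "pair_le (DM_join R G) u" if u: "u \<in> DM R" "\<forall>q\<in>G. pair_le q u" for u
  proof -
    have "bdown R (wup R (\<Union>(fst ` G))) \<subseteq> bdown R (wup R (fst u))"
      using u(2) by (intro bdown_mono wup_mono) (auto simp: pair_le_def)
    also have "\<dots> = fst u"
      using u(1) by (cases u) (simp add: DM_memD(1) bdown_wup_eq_if_in_range)
    finally show ?thesis
      using u(2) unfolding pair_le_def DM_join_def by auto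
  qed
  have "is_join (DM R) pair_le G (DM_join R G)"
    unfolding is_join_def using DM_join_in_DM[OF G] upper least by blast
  moreover have "p = q" if "is_join (DM R) pair_le G p" "is_join (DM R) pair_le G q" for p q
    using that unfolding is_join_def pair_le_def by (auto simp: prod_eq_iff)
  ultimately show ?thesis
    by blast
qed

lemma cji_DM_iff:
  "cji (DM R) pair_le p \<longleftrightarrow> p \<in> DM R \<and> (\<forall>G \<subseteq> DM R. DM_join R G = p \<longrightarrow> p \<in> G)"
  unfolding cji_def using is_join_DM_iff by metis

lemma cji_DM_joinD: "cji (DM R) pair_le p \<Longrightarrow> DM_join R G = p \<Longrightarrow> G \<subseteq> DM R \<Longrightarrow> p \<in> G"
  by (simp add: cji_DM_iff)

subsection \<open>Completely join-irreducible elements of DM(RS)\<close>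

definition rs_pair :: "('a \<times> 'a) set \<Rightarrow> 'a set \<Rightarrow> 'a set \<times> 'a set" where
  "rs_pair R X = (bdown R X, bup R X)"

lemma rs_pair_in_DM: "rs_pair R X \<in> DM R"
proof -
  have "bup R (wup R (bdown R X)) \<subseteq> bup R X"
    by (rule bup_mono[OF wup_bdown_subset])
  moreover have "bdown R X \<inter> singR R = bup R X \<inter> singR R"
    by (auto simp: singR_def bdown_def bup_def)
  ultimately show ?thesis
    unfolding DM_def rs_pair_def by auto
qed

lemma cji_DM_rs_pair_iff:
  assumes W: "W \<in> range (wup R)"
  shows "cji (DM R) pair_le (rs_pair R W) \<longleftrightarrow> cji (range (wup R)) (\<subseteq>) W"
proof
  assume cji: "cji (DM R) pair_le (rs_pair R W)"
  show "cji (range (wup R)) (\<subseteq>) W"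
    unfolding cji_range_wup_iff
  proof (intro conjI allI impI W)
    fix F assume F: "F \<subseteq> range (wup R)" and W_eq: "\<Union>F = W"
    have closed: "wup R (bdown R V) = V" if "V \<in> F" for V
      using wup_bdown_eq_if_in_range[OF subsetD[OF F that]] .
    have "wup R (\<Union>(bdown R ` F)) = (\<Union>V\<in>F. wup R (bdown R V))"
      by (simp add: wup_Union image_image)
    also have "\<dots> = (\<Union>V\<in>F. V)"
      by (rule SUP_cong[OF refl closed])
    also have "\<dots> = W"
      using W_eq by simp
    finally have "wup R (\<Union>(bdown R ` F)) = W" .
    moreover have "\<Union>(bup R ` F) = bup R W"
      by (simp add: bup_Union flip: W_eq)
    ultimately have "DM_join R (rs_pair R ` F) = rs_pair R W"
      by (simp add: DM_join_def rs_pair_def image_image)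
    moreover have "rs_pair R ` F \<subseteq> DM R"
      by (simp add: image_subset_iff rs_pair_in_DM)
    ultimately have "rs_pair R W \<in> rs_pair R ` F"
      by (rule cji_DM_joinD[OF cji])
    then obtain V where V: "V \<in> F" "bdown R W = bdown R V"
      by (auto simp: rs_pair_def)
    then have "V = W"
      using closed[OF V(1)] wup_bdown_eq_if_in_range[OF W] by simp
    with V(1) show "W \<in> F"
      by simp
  qed
next
  assume cji: "cji (range (wup R)) (\<subseteq>) W"
  show "cji (DM R) pair_le (rs_pair R W)"
    unfolding cji_DM_iff
  proof (intro conjI allI impI rs_pair_in_DM)
    fix G assume G: "G \<subseteq> DM R" and join: "DM_join R G = rs_pair R W"
    have "\<Union>((\<lambda>q. wup R (fst q)) ` G) = wup R (bdown R (wup R (\<Union>(fst ` G))))"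
      by (simp only: wup_bdown_wup) (simp add: wup_Union image_image)
    also have "\<dots> = W"
      using join W by (simp add: DM_join_def rs_pair_def wup_bdown_eq_if_in_range)
    finally have "W \<in> (\<lambda>q. wup R (fst q)) ` G"
      using cji_range_wupD[OF cji] by (simp add: image_subset_iff)
    then obtain A B where AB: "(A, B) \<in> G" "W = wup R A"
      by auto
    have AB_DM: "(A, B) \<in> DM R"
      using AB(1) G by blast
    have "A = bdown R W"
      using DM_memD(1)[OF AB_DM] AB(2) by (simp add: bdown_wup_eq_if_in_range)
    moreover have "B = bup R W"
    proof
      have "\<Union>(snd ` G) = bup R W"
        using join by (simp add: DM_join_def rs_pair_def)
      then show "B \<subseteq> bup R W"
        using AB(1) by force
      show "bup R W \<subseteq> B"
        using DM_memD(3)[OF AB_DM] AB(2) by simp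
    qed
    ultimately show "rs_pair R W \<in> G"
      using AB(1) by (simp add: rs_pair_def)
  qed
qed

lemma bdown_subset_if_refl: "refl R \<Longrightarrow> bdown R X \<subseteq> X"
  by (auto simp: bdown_def Rimg_def refl_onD)

lemma subset_wup_if_refl: "refl R \<Longrightarrow> X \<subseteq> wup R X"
  unfolding wup_def Rconv_def refl_on_def by blast

lemma subset_bup_if_refl: "refl R \<Longrightarrow> X \<subseteq> bup R X"
  unfolding bup_def Rimg_def refl_on_def by blast

lemma cji_DM_empty_pair_iff:
  assumes refl: "refl R" and W: "W \<in> range (bup R)" and disj: "W \<inter> singR R = {}"
  shows "cji (DM R) pair_le ({}, W) \<longleftrightarrow> cji (range (bup R)) (\<subseteq>) W"
proof -
  have bdown_empty: "bdown R {} = {}"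
    using bdown_subset_if_refl[OF refl] by blast
  have in_DM: "({}, V) \<in> DM R" if "V \<in> range (bup R)" "V \<subseteq> W" for V
  proof -
    have "{} \<in> range (bdown R)"
      using bdown_empty by (metis rangeI)
    moreover have "bup R (wup R {}) = {}"
      by (simp add: bup_def wup_def)
    ultimately show ?thesis
      using that disj by (auto simp: DM_def)
  qed
  show ?thesis
  proof
    assume cji: "cji (DM R) pair_le ({}, W)"
    show "cji (range (bup R)) (\<subseteq>) W"
      unfolding cji_range_bup_iff
    proof (intro conjI allI impI W)
      fix F assume F: "F \<subseteq> range (bup R)" and W_eq: "\<Union>F = W"
      have join: "DM_join R (Pair {} ` F) = ({}, W)"
        using W_eq bdown_empty by (simp add: DM_join_def image_image wup_def)
      have "({}, V) \<in> DM R" if "V \<in> F" for V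
        using in_DM[OF subsetD[OF F that]] that W_eq by blast
      then have "Pair {} ` F \<subseteq> DM R"
        by blast
      with join have "({}, W) \<in> Pair ({} :: 'a set) ` F"
        by (rule cji_DM_joinD[OF cji])
      then show "W \<in> F"
        by blast
    qed
  next
    assume cji: "cji (range (bup R)) (\<subseteq>) W"
    show "cji (DM R) pair_le ({}, W)"
      unfolding cji_DM_iff
    proof (intro conjI allI impI)
      show "({}, W) \<in> DM R"
        using in_DM W by blast
      fix G assume G: "G \<subseteq> DM R" and join: "DM_join R G = ({}, W)"
      have "snd ` G \<subseteq> range (bup R)" "\<Union>(snd ` G) = W"
        using snd_image_subset_range_bup[OF G] join by (simp_all add: DM_join_def)
      then have "W \<in> snd ` G"
        by (rule cji_range_bupD[OF cji])
      then obtain A where A: "(A, W) \<in> G"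
        by force
      have "A \<subseteq> \<Union>(fst ` G)"
        using A by force
      also have "\<dots> \<subseteq> bdown R (wup R (\<Union>(fst ` G)))"
        by (rule subset_bdown_wup)
      also have "\<dots> = {}"
        using join by (simp add: DM_join_def)
      finally have "A = {}"
        by blast
      then show "({}, W) \<in> G"
        using A by simp
    qed
  qed
qed

lemma rs_pair_singleton_if_notin_singR:
  assumes refl: "refl R" and x: "x \<notin> singR R"
  shows "rs_pair R {x} = ({}, bup R {x})" and "bup R {x} \<inter> singR R = {}"
proof -
  have xx: "x \<in> Rimg R x"
    using refl by (simp add: Rimg_def refl_onD)
  have "x \<notin> bdown R {x}"
    using x xx by (auto simp: bdown_def singR_def)
  then show "rs_pair R {x} = ({}, bup R {x})"
    using bdown_subset_if_refl[OF refl, of "{x}"] by (auto simp: rs_pair_def)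
  show "bup R {x} \<inter> singR R = {}"
  proof (rule ccontr)
    assume "bup R {x} \<inter> singR R \<noteq> {}"
    then obtain y z where "x \<in> Rimg R y" "Rimg R y = {z}"
      by (auto simp: bup_def singR_def)
    moreover have "y \<in> Rimg R y"
      using refl by (simp add: Rimg_def refl_onD)
    ultimately show False
      using x by (auto simp: singR_def)
  qed
qed

text \<open>Generators \<open>({y}\<^sup>\<blacktriangledown>, {y}\<^sup>\<blacktriangle>)\<close> with \<open>y \<in> Y \<inter> \<S>\<close> are omitted: by reflexivity such \<open>y\<close>
  lie in \<open>A\<close>, and \<open>{y}\<^sup>\<blacktriangle> \<subseteq> {y}\<^sup>\<vartriangle>\<^sup>\<blacktriangle>\<close>.\<close>

definition DM_generators :: "('a \<times> 'a) set \<Rightarrow> 'a set \<Rightarrow> 'a set \<Rightarrow> ('a set \<times> 'a set) set" where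
  "DM_generators R A Y =
     (\<lambda>a. rs_pair R (wup R {a})) ` A \<union> (\<lambda>y. rs_pair R {y}) ` (Y - singR R)"

lemma DM_join_DM_generators:
  assumes refl: "refl R" and p: "(A, bup R Y) \<in> DM R"
  shows "DM_join R (DM_generators R A Y) = (A, bup R Y)"
proof -
  let ?G = "DM_generators R A Y"
  have empty: "bdown R {y} = {}" if "y \<notin> singR R" for y
    using rs_pair_singleton_if_notin_singR[OF refl that] by (simp add: rs_pair_def)
  have A_closed: "bdown R (wup R A) = A"
    using p by (simp add: DM_memD(1) bdown_wup_eq_if_in_range)
  have wup_a: "wup R {a} \<subseteq> wup R A" if "a \<in> A" for a
    using that by (simp add: wup_mono)
  have "A \<subseteq> \<Union>(fst ` ?G)"
    using subset_bdown_wup[of _ R] by (force simp: DM_generators_def rs_pair_def)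
  moreover have "\<Union>(fst ` ?G) \<subseteq> bdown R (wup R A)"
    using empty bdown_mono[OF wup_a, where R = R] by (auto simp: DM_generators_def rs_pair_def)
  ultimately have "bdown R (wup R (\<Union>(fst ` ?G))) = A"
    using A_closed by (metis bdown_mono bdown_wup_bdown subset_antisym wup_mono)
  moreover have "\<Union>(snd ` ?G) = bup R Y"
  proof
    show "\<Union>(snd ` ?G) \<subseteq> bup R Y"
    proof -
      have "bup R (wup R {a}) \<subseteq> bup R Y" if "a \<in> A" for a
        using bup_mono[OF wup_a[OF that]] DM_memD(3)[OF p] by blast
      moreover have "bup R {y} \<subseteq> bup R Y" if "y \<in> Y" for y
        using that by (simp add: bup_mono)
      ultimately show ?thesis
        by (simp add: DM_generators_def rs_pair_def image_Un image_image UN_subset_iff)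
    qed
    show "bup R Y \<subseteq> \<Union>(snd ` ?G)"
    proof
      fix z assume "z \<in> bup R Y"
      then obtain y where y: "y \<in> Y" "y \<in> Rimg R z"
        by (auto simp: bup_def)
      then have z: "z \<in> bup R {y}"
        by (auto simp: bup_def)
      show "z \<in> \<Union>(snd ` ?G)"
      proof (cases "y \<in> singR R")
        case False
        then show ?thesis
          using y z by (force simp: DM_generators_def rs_pair_def)
      next
        case True
        have "y \<in> bup R Y"
          using y(1) subset_bup_if_refl[OF refl] by blast
        then have "y \<in> A"
          using True DM_memD(4)[OF p] by blast
        moreover have "z \<in> bup R (wup R {y})"
          using z bup_mono[OF subset_wup_if_refl[OF refl]] by blast
        ultimately show ?thesis
          by (force simp: DM_generators_def rs_pair_def)
      qed
    qed
  qed
  ultimately show ?thesis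
    by (simp add: DM_join_def)
qed

lemma DM_generators_subset_DM: "DM_generators R A Y \<subseteq> DM R"
  by (auto simp: DM_generators_def rs_pair_in_DM)

theorem mainTheorem2:
  fixes R :: "('a \<times> 'a) set"
  assumes "refl R"
  shows "{p. cji (DM R) pair_le p} =
     {(bdown R (wup R {x}), bup R (wup R {x})) | x.
         cji (range (wup R)) (\<subseteq>) (wup R {x})}
   \<union> {(bdown R {x}, bup R {x}) | x.
         cji (range (bup R)) (\<subseteq>) (bup R {x}) \<and> x \<notin> singR R}"
  (is "_ = ?Jw \<union> ?Jb")
proof -
  have w: "cji (DM R) pair_le (rs_pair R (wup R {x})) \<longleftrightarrow> cji (range (wup R)) (\<subseteq>) (wup R {x})"
    for x by (simp add: cji_DM_rs_pair_iff)
  have b: "cji (DM R) pair_le (rs_pair R {x}) \<longleftrightarrow> cji (range (bup R)) (\<subseteq>) (bup R {x})"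
    if "x \<notin> singR R" for x
    using rs_pair_singleton_if_notin_singR[OF assms that]
    by (simp add: cji_DM_empty_pair_iff[OF assms])
  have "p \<in> ?Jw \<union> ?Jb" if cji: "cji (DM R) pair_le p" for p
  proof -
    obtain A Y where p: "p = (A, bup R Y)" "(A, bup R Y) \<in> DM R"
      using cji by (auto simp: cji_def DM_def)
    then have "p \<in> DM_generators R A Y"
      using cji DM_generators_subset_DM DM_join_DM_generators[OF assms]
      unfolding cji_DM_iff by metis
    then show ?thesis
      using cji w b by (auto simp: DM_generators_def rs_pair_def)
  qed
  moreover have "cji (DM R) pair_le p" if "p \<in> ?Jw \<union> ?Jb" for p
    using that w b by (auto simp: rs_pair_def)
  ultimately show ?thesis
    by blast
qed

end
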